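(* Let $A\in\mathbb{R}^{m\times n}$ with $A\geq 0$ and $A^{\dagger}\geq 0$. Let $A=M-N=U-V$ be two proper regular splittings of $A$ such that $R(M+U-A)=R(A)$ and $N(M+U-A)=N(A)$. Then, with $H=U^{\dagger}VM^{\dagger}N$, $$\rho(H)\leq \min\{\rho(U^{\dagger}V),\rho(M^{\dagger}N)\}<1.$$
   Context: All matrices are real. $X^{\dagger}$ denotes the Moore–Penrose inverse of $X$, and $\rho(\cdot)$ the spectral radius. For a matrix $X$, $X\geq 0$ means that all entries of $X$ are nonnegative and at least one entry is positive; $X\geq Y$ means $X-Y\geq 0$. $R(X)$ and $N(X)$ denote range and null space. A splitting $A=U-V$ is proper if $R(U)=R(A)$ and $N(U)=N(A)$; it is a proper regular splitting if it is proper, $U^{\dagger}\geq 0$ and $V\geq 0$. A matrix $A$ is semi-monotone if $A^{\dagger}\geq 0$. *)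

theory Defs
  imports "HOL-Analysis.Analysis"
begin

definition mp_inverse :: "real^'n^'m \<Rightarrow> real^'m^'n" where
  "mp_inverse A = (THE X. A ** X ** A = A \<and> X ** A ** X = X \<and>
       transpose (A ** X) = A ** X \<and> transpose (X ** A) = X ** A)"

definition mat_range :: "real^'n^'m \<Rightarrow> (real^'m) set" where
  "mat_range A = range (\<lambda>x. A *v x)"

definition mat_null :: "real^'n^'m \<Rightarrow> (real^'n) set" where
  "mat_null A = {x. A *v x = 0}"

text \<open>Entrywise nonnegative with at least one positive entry (the paper's X \<ge> 0).\<close>
definition nonneg_mat :: "real^'n^'m \<Rightarrow> bool" where
  "nonneg_mat X \<longleftrightarrow> (\<forall>i j. X $ i $ j \<ge> 0) \<and> (\<exists>i j. X $ i $ j > 0)"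

definition complex_eigenvalue :: "real^'n^'n \<Rightarrow> complex \<Rightarrow> bool" where
  "complex_eigenvalue A c \<longleftrightarrow>
     (\<exists>v :: complex^'n. v \<noteq> 0 \<and> (\<chi> i j. complex_of_real (A $ i $ j)) *v v = c *s v)"

definition spectral_radius :: "real^'n^'n \<Rightarrow> real" where
  "spectral_radius A = Max {cmod c | c. complex_eigenvalue A c}"

definition proper_splitting :: "real^'n^'m \<Rightarrow> real^'n^'m \<Rightarrow> real^'n^'m \<Rightarrow> bool" where
  "proper_splitting A U V \<longleftrightarrow> A = U - V \<and> mat_range U = mat_range A \<and> mat_null U = mat_null A"

definition proper_regular_splitting :: "real^'n^'m \<Rightarrow> real^'n^'m \<Rightarrow> real^'n^'m \<Rightarrow> bool" where
  "proper_regular_splitting A U V \<longleftrightarrow>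
     proper_splitting A U V \<and> nonneg_mat (mp_inverse U) \<and> nonneg_mat V"

end

theory Submission
  imports Defs
begin

text \<open>For a proper splitting \<open>A = U - V\<close> the Penrose equations force \<open>U U\<^sup>\<dagger> = A A\<^sup>\<dagger>\<close> and
  \<open>U\<^sup>\<dagger> U = A\<^sup>\<dagger> A\<close>; the rest is algebra with these projections plus Perron--Frobenius theory.
  Perron's theorem, obtained from Brouwer's fixed point theorem, provides nonnegative eigenvectors
  for the spectral radius of a nonnegative matrix, and the Collatz--Wielandt bound turns a nonzero
  \<open>y \<ge> 0\<close> with \<open>\<mu> y \<le> T y\<close> into \<open>\<mu> \<le> \<rho>(T)\<close>.

  If \<open>z \<ge> 0\<close> is a left Perron vector of \<open>H = U\<^sup>\<dagger>V M\<^sup>\<dagger>N\<close> and \<open>\<rho>(H) > 0\<close>, then \<open>r = z A\<^sup>\<dagger>V\<close>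
  is nonnegative, nonzero and satisfies \<open>\<rho>(H) r \<le> r U\<^sup>\<dagger>V\<close>, whence \<open>\<rho>(H) \<le> \<rho>(U\<^sup>\<dagger>V)\<close>; as
  \<open>\<rho>(X Y) \<le> \<rho>(Y X)\<close> for nonnegative \<open>X\<close>, \<open>Y\<close>, exchanging the two splittings gives
  \<open>\<rho>(H) \<le> \<rho>(M\<^sup>\<dagger>N)\<close>. Finally, a Perron vector \<open>x\<close> of \<open>U\<^sup>\<dagger>V\<close> for an eigenvalue \<open>l \<ge> 1\<close>
  would satisfy \<open>(1 - l) A\<^sup>\<dagger>V x = l x\<close>, which is impossible since \<open>A\<^sup>\<dagger>V \<ge> 0\<close>.\<close>

lemma matrix_diff_ldistrib: "(A::'a::ring_1^'n^'m) ** (B - C) = A ** B - A ** C"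
  by (simp add: vec_eq_iff matrix_matrix_mult_def algebra_simps sum_subtractf)

lemma matrix_diff_rdistrib: "((A::'a::ring_1^'n^'m) - B) ** C = A ** C - B ** C"
  by (simp add: vec_eq_iff matrix_matrix_mult_def algebra_simps sum_subtractf)

lemma matrix_add_rdistrib: "((A::'a::semiring_1^'n^'m) + B) ** C = A ** C + B ** C"
  by (simp add: vec_eq_iff matrix_matrix_mult_def algebra_simps sum.distrib)

lemma transpose_diff: "transpose ((A::'a::ab_group_add^'n^'m) - B) = transpose A - transpose B"
  by (simp add: vec_eq_iff transpose_def)

lemma mat_matrix_vector_mult: "mat c *v (v::'a::comm_semiring_1^'n) = c *s v"
  by (simp add: vec_eq_iff matrix_vector_mult_def mat_def if_distrib if_distribR cong: if_cong)

lemma nonneg_matrix_mult: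
  "0 \<le> (A::'a::linordered_semidom^'n^'m) \<Longrightarrow> 0 \<le> (B::'a^'p^'n) \<Longrightarrow> 0 \<le> A ** B"
  by (simp add: less_eq_vec_def matrix_matrix_mult_def sum_nonneg)

lemma matrix_vector_mult_mono:
  "0 \<le> (A::'a::linordered_semidom^'n^'m) \<Longrightarrow> x \<le> y \<Longrightarrow> A *v x \<le> A *v y"
  by (simp add: less_eq_vec_def matrix_vector_mult_def sum_mono mult_left_mono)

lemma vector_matrix_mult_mono:
  "0 \<le> (A::'a::linordered_semidom^'n^'m) \<Longrightarrow> x \<le> y \<Longrightarrow> x v* A \<le> y v* A"
  by (simp add: less_eq_vec_def vector_matrix_mult_def sum_mono mult_right_mono)

lemma nonneg_matrix_vector_mult: "0 \<le> (A::'a::linordered_semidom^'n^'m) \<Longrightarrow> 0 \<le> x \<Longrightarrow> 0 \<le> A *v x"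
  using matrix_vector_mult_mono[of A 0 x] by simp

lemma nonneg_vector_matrix_mult: "0 \<le> (A::'a::linordered_semidom^'n^'m) \<Longrightarrow> 0 \<le> x \<Longrightarrow> 0 \<le> x v* A"
  using vector_matrix_mult_mono[of A 0 x] by simp

lemma nonneg_mat_imp_nonneg: "nonneg_mat X \<Longrightarrow> 0 \<le> X"
  by (simp add: nonneg_mat_def less_eq_vec_def)

section \<open>The Moore--Penrose inverse\<close>

definition penrose_inverse :: "real^'n^'m \<Rightarrow> real^'m^'n \<Rightarrow> bool" where
  "penrose_inverse A X \<longleftrightarrow> A ** X ** A = A \<and> X ** A ** X = X \<and>
       transpose (A ** X) = A ** X \<and> transpose (X ** A) = X ** A"

lemma penrose_inverse_unique:
  assumes "penrose_inverse A X" "penrose_inverse A Y"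
  shows "X = Y"
proof -
  have X1: "A ** X ** A = A" and X2: "X ** A ** X = X"
    and X3: "transpose (A ** X) = A ** X" and X4: "transpose (X ** A) = X ** A"
    using assms(1) unfolding penrose_inverse_def by auto
  have Y1: "A ** Y ** A = A" and Y2: "Y ** A ** Y = Y"
    and Y3: "transpose (A ** Y) = A ** Y" and Y4: "transpose (Y ** A) = Y ** A"
    using assms(2) unfolding penrose_inverse_def by auto
  have AXAY: "transpose A = transpose A ** (A ** Y)"
    by (metis Y1 Y3 matrix_transpose_mul matrix_mul_assoc)
  have XAAY: "transpose A = (X ** A) ** transpose A"
    by (metis X1 X4 matrix_transpose_mul matrix_mul_assoc)
  have "X = X ** (transpose X ** transpose A)"
    by (metis X2 X3 matrix_transpose_mul matrix_mul_assoc)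
  also have "\<dots> = X ** A ** Y"
    by (metis AXAY X2 X3 matrix_transpose_mul matrix_mul_assoc)
  also have "\<dots> = (X ** A) ** (transpose A ** transpose Y) ** Y"
    by (metis XAAY Y2 Y4 matrix_transpose_mul matrix_mul_assoc)
  also have "\<dots> = Y"
    by (metis XAAY Y2 Y4 matrix_transpose_mul matrix_mul_assoc)
  finally show ?thesis .
qed

lemma orthogonal_projection_matrix_exists:
  fixes S :: "(real^'n) set"
  assumes "subspace S"
  shows "\<exists>P::real^'n^'n. transpose P = P \<and> (\<forall>x. P *v x \<in> S) \<and> (\<forall>x\<in>S. P *v x = x)"
proof -
  obtain T where T: "T \<subseteq> S" "pairwise orthogonal T" "span T = S"
    using orthogonal_basis_subspace[OF assms] by metis
  define P :: "real^'n^'n" where "P = (\<chi> i j. \<Sum>b\<in>T. b$i * b$j / (b \<bullet> b))"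
  have Pv: "P *v x = (\<Sum>b\<in>T. (b \<bullet> x / (b \<bullet> b)) *\<^sub>R b)" for x
    by (simp add: vec_eq_iff P_def matrix_vector_mult_def inner_vec_def sum_component
        sum_distrib_left sum_distrib_right sum_divide_distrib sum.swap[of _ T] mult_ac)
  have PS: "P *v x \<in> S" for x
    unfolding Pv T(3)[symmetric] by (intro span_sum span_mul span_base)
  have "P *v x = x" if "x \<in> S" for x
  proof -
    have "x - P *v x \<in> S" using PS that assms by (simp add: subspace_diff)
    moreover have "orthogonal w (x - P *v x)" if "w \<in> S" for w
      unfolding Pv using Gram_Schmidt_step[OF T(2)] that T(3) by auto
    ultimately show ?thesis by (metis orthogonal_self eq_iff_diff_eq_0)
  qed
  moreover have "transpose P = P" by (simp add: P_def transpose_def mult.commute)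
  ultimately show ?thesis using PS by blast
qed

lemma subspace_mat_range: "subspace (mat_range (A::real^'n^'m))"
  unfolding mat_range_def by (rule linear_subspace_image[OF _ subspace_UNIV]) simp

lemma subspace_mat_null: "subspace (mat_null (A::real^'n^'m))"
  by (auto simp: subspace_def mat_null_def matrix_vector_right_distrib matrix_vector_mult_scaleR)

lemma matrix_factor_through_range:
  fixes A :: "real^'n^'m" and B :: "real^'p^'m"
  assumes "\<And>x. B *v x \<in> mat_range A"
  shows "\<exists>G. A ** G = B"
proof -
  have "\<exists>v. A *v v = B *v axis j 1" for j
    using assms[of "axis j 1"] unfolding mat_range_def by (metis rangeE)
  then obtain g where g: "\<And>j. A *v g j = B *v axis j 1" by metis
  have "A ** (\<chi> i j. g j $ i) = B"
    using g by (simp add: vec_eq_iff matrix_matrix_mult_def matrix_vector_mult_def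
        axis_def if_distrib cong: if_cong)
  then show ?thesis ..
qed

text \<open>With \<open>P\<close> the orthogonal projection onto \<open>R(A)\<close>, \<open>Q\<close> the one onto \<open>N(A)\<^sup>\<bottom>\<close>
  and \<open>G\<close> any matrix with \<open>A G = P\<close>, the matrix \<open>Q G P\<close> satisfies the Penrose equations.\<close>
lemma penrose_inverse_exists: "\<exists>X. penrose_inverse (A::real^'n^'m) X"
proof -
  obtain P :: "real^'m^'m" where P: "transpose P = P" "\<And>x. P *v x \<in> mat_range A"
      "\<And>x. x \<in> mat_range A \<Longrightarrow> P *v x = x"
    using orthogonal_projection_matrix_exists[OF subspace_mat_range] by blast
  obtain K :: "real^'n^'n" where K: "transpose K = K" "\<And>x. K *v x \<in> mat_null A"
      "\<And>x. x \<in> mat_null A \<Longrightarrow> K *v x = x"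
    using orthogonal_projection_matrix_exists[OF subspace_mat_null] by blast
  obtain G where AG: "A ** G = P"
    using matrix_factor_through_range[OF P(2)] by blast
  have PA: "P ** A = A"
    by (simp add: matrix_eq matrix_vector_mul_assoc[symmetric] P(3) mat_range_def)
  have PP: "P ** P = P"
    by (simp add: matrix_eq matrix_vector_mul_assoc[symmetric] P(2,3))
  define Q where "Q = mat 1 - K"
  have AK: "A ** K = 0"
    using K(2) by (simp add: matrix_eq matrix_vector_mul_assoc[symmetric] mat_null_def)
  have KK: "K ** K = K"
    by (simp add: matrix_eq matrix_vector_mul_assoc[symmetric] K(2,3))
  have QQ: "Q ** Q = Q" by (simp add: Q_def matrix_diff_ldistrib matrix_diff_rdistrib KK)
  have AQ: "A ** Q = A" by (simp add: Q_def matrix_diff_ldistrib AK)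
  have QGA: "Q ** G ** A = Q"
  proof (subst matrix_eq, intro allI)
    fix v
    have "A *v (G *v (A *v v)) = A *v v"
      by (metis AG PA matrix_vector_mul_assoc)
    then have "G *v (A *v v) - v \<in> mat_null A"
      by (simp add: mat_null_def matrix_vector_mult_diff_distrib)
    then have "Q *v (G *v (A *v v)) = Q *v v"
      by (auto dest: K(3) simp: Q_def algebra_simps)
    then show "(Q ** G ** A) *v v = Q *v v"
      by (simp add: matrix_vector_mul_assoc matrix_mul_assoc)
  qed
  define X where "X = Q ** G ** P"
  have AX: "A ** X = P" by (metis AG AQ PP X_def matrix_mul_assoc)
  have XA: "X ** A = Q" by (metis PA QGA X_def matrix_mul_assoc)
  have "transpose Q = Q" by (simp add: Q_def transpose_diff K(1))
  then have "penrose_inverse A X"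
    unfolding penrose_inverse_def by (metis AX XA PA P(1) QQ X_def matrix_mul_assoc)
  then show ?thesis ..
qed

lemma penrose_inverse_mp_inverse: "penrose_inverse A (mp_inverse A)"
proof -
  have "\<exists>!X. penrose_inverse A X"
    using penrose_inverse_exists penrose_inverse_unique by blast
  then show ?thesis
    unfolding mp_inverse_def penrose_inverse_def[symmetric] by (rule theI')
qed

lemma symmetric_idempotent_eq_range:
  fixes E F :: "real^'n^'n"
  assumes "transpose E = E" "transpose F = F" "E ** E = E" "F ** F = F"
    and "range ((*v) E) = range ((*v) F)"
  shows "E = F"
proof -
  have fixes_range: "G *v y = y" if "G ** G = G" "y \<in> range ((*v) G)" for G :: "real^'n^'n" and y
    using that by (auto simp: matrix_vector_mul_assoc)
  have EF: "E ** F = F"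
    using fixes_range[OF assms(3)] assms(5) by (simp add: matrix_eq matrix_vector_mul_assoc[symmetric])
  have "F ** E = E"
    using fixes_range[OF assms(4)] assms(5)[symmetric] by (simp add: matrix_eq matrix_vector_mul_assoc[symmetric])
  then have "E = transpose (F ** E)" using assms(1) by simp
  also have "\<dots> = E ** F" by (simp add: matrix_transpose_mul assms(1,2))
  finally show ?thesis using EF by simp
qed

lemma symmetric_idempotent_eq_null:
  fixes E F :: "real^'n^'n"
  assumes "transpose E = E" "transpose F = F" "E ** E = E" "F ** F = F"
    and "\<And>x. E *v x = 0 \<longleftrightarrow> F *v x = 0"
  shows "E = F"
proof -
  have kills_complement: "G *v (x - H *v x) = 0"
    if "H ** H = H" "\<And>x. G *v x = 0 \<longleftrightarrow> H *v x = 0" for G H :: "real^'n^'n" and x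
  proof -
    have "H *v (x - H *v x) = 0"
      using that(1) by (simp add: matrix_vector_mult_diff_distrib matrix_vector_mul_assoc)
    then show ?thesis using that(2) by blast
  qed
  have EF: "E ** F = E"
    using kills_complement[OF assms(4), of E] assms(5)
    by (simp add: matrix_eq matrix_vector_mult_diff_distrib matrix_vector_mul_assoc)
  have "F ** E = F"
    using kills_complement[OF assms(3), of F] assms(5)
    by (simp add: matrix_eq matrix_vector_mult_diff_distrib matrix_vector_mul_assoc)
  then have "F = transpose (F ** E)" using assms(2) by simp
  also have "\<dots> = E ** F" by (simp add: matrix_transpose_mul assms(1,2))
  finally show ?thesis using EF by simp
qed

lemma penrose_inverse_projections:
  assumes "penrose_inverse A X"
  shows "transpose (A ** X) = A ** X" "(A ** X) ** (A ** X) = A ** X"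
    "range ((*v) (A ** X)) = mat_range A"
    "transpose (X ** A) = X ** A" "(X ** A) ** (X ** A) = X ** A"
    "(X ** A) *v x = 0 \<longleftrightarrow> A *v x = 0"
proof -
  have AXA: "A ** X ** A = A" using assms by (simp add: penrose_inverse_def)
  show "transpose (A ** X) = A ** X" "transpose (X ** A) = X ** A"
    "(A ** X) ** (A ** X) = A ** X" "(X ** A) ** (X ** A) = X ** A"
    using assms by (simp_all add: penrose_inverse_def matrix_mul_assoc)
  show "range ((*v) (A ** X)) = mat_range A"
  proof (intro set_eqI iffI)
    fix y assume "y \<in> range ((*v) (A ** X))"
    then show "y \<in> mat_range A"
      by (auto simp: mat_range_def matrix_vector_mul_assoc[symmetric])
  next
    fix y assume "y \<in> mat_range A"
    then obtain x where "y = A *v x" by (auto simp: mat_range_def)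
    then have "y = (A ** X) *v (A *v x)" by (simp add: AXA matrix_vector_mul_assoc)
    then show "y \<in> range ((*v) (A ** X))" by blast
  qed
  show "(X ** A) *v x = 0 \<longleftrightarrow> A *v x = 0"
  proof
    assume "(X ** A) *v x = 0"
    then have "A *v ((X ** A) *v x) = 0" by simp
    then show "A *v x = 0" by (simp add: AXA matrix_vector_mul_assoc matrix_mul_assoc)
  qed (simp add: matrix_vector_mul_assoc[symmetric])
qed

lemma same_range_null_projections:
  assumes "penrose_inverse A X" "penrose_inverse U Y"
    and "mat_range U = mat_range A" "mat_null U = mat_null A"
  shows "U ** Y = A ** X" "Y ** U = X ** A"
proof -
  note PX = penrose_inverse_projections[OF assms(1)]
  note PY = penrose_inverse_projections[OF assms(2)]
  show "U ** Y = A ** X"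
    using assms(3) by (intro symmetric_idempotent_eq_range[OF PY(1) PX(1) PY(2) PX(2)]) (simp add: PX PY)
  have "U *v x = 0 \<longleftrightarrow> A *v x = 0" for x
    using assms(4) by (auto simp: mat_null_def set_eq_iff)
  then show "Y ** U = X ** A"
    by (intro symmetric_idempotent_eq_null[OF PY(4) PX(4) PY(5) PX(5)]) (simp add: PX(6) PY(6))
qed

section \<open>Complex eigenvalues and the spectral radius\<close>

definition complex_of_matrix :: "real^'n^'m \<Rightarrow> complex^'n^'m" where
  "complex_of_matrix A = (\<chi> i j. complex_of_real (A $ i $ j))"

lemma complex_eigenvalue_iff:
  "complex_eigenvalue A c \<longleftrightarrow> (\<exists>v. v \<noteq> 0 \<and> complex_of_matrix A *v v = c *s v)"
  by (simp add: complex_eigenvalue_def complex_of_matrix_def)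

lemma eigenvector_combination_eq_0:
  fixes C :: "'a::field^'n^'n"
  assumes "finite S" "\<And>c. c \<in> S \<Longrightarrow> v c \<noteq> 0 \<and> C *v v c = c *s v c"
    and "(\<Sum>c\<in>S. a c *s v c) = 0"
  shows "\<forall>c\<in>S. a c = 0"
  using assms
proof (induction S arbitrary: a rule: finite_induct)
  case (insert d S)
  have Cv: "C *v (b *s v c) = (c * b) *s v c" if "c \<in> insert d S" for b c
    using insert.prems(1)[OF that] by (simp add: vector_scalar_commute vector_smult_assoc mult.commute)
  text \<open>Applying \<open>C - d I\<close> to the relation removes its \<open>v d\<close> term.\<close>
  have "0 = C *v (\<Sum>c\<in>insert d S. a c *s v c) - d *s (\<Sum>c\<in>insert d S. a c *s v c)"
    using insert.prems(2) by simp
  also have "\<dots> = (\<Sum>c\<in>insert d S. C *v (a c *s v c) - d *s (a c *s v c))"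
    by (simp only: vec.linear_sum[OF matrix_vector_mul_linear_gen] sum_cmul sum_subtractf)
  also have "\<dots> = (\<Sum>c\<in>insert d S. ((c - d) * a c) *s v c)"
    by (rule sum.cong) (simp_all add: Cv vector_smult_assoc vector_sub_rdistrib left_diff_distrib)
  also have "\<dots> = (\<Sum>c\<in>S. ((c - d) * a c) *s v c)"
    using insert.hyps by simp
  finally have "\<forall>c\<in>S. (c - d) * a c = 0"
    using insert.IH[of "\<lambda>c. (c - d) * a c"] insert.prems(1) by simp
  then have aS: "\<forall>c\<in>S. a c = 0"
    using insert.hyps(2) by auto
  then have "a d *s v d = 0"
    using insert.prems(2) insert.hyps by simp
  then show ?case
    using aS insert.prems(1) by (simp add: vector_mul_eq_0)
qed simp

lemma finite_complex_eigenvalues: "finite {c. complex_eigenvalue A c}"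
proof -
  define E where "E = {c. complex_eigenvalue A c}"
  have "\<forall>c\<in>E. \<exists>w. w \<noteq> 0 \<and> complex_of_matrix A *v w = c *s w"
    by (simp add: E_def complex_eigenvalue_iff)
  then have "\<exists>v. \<forall>c\<in>E. v c \<noteq> 0 \<and> complex_of_matrix A *v v c = c *s v c"
    by (rule bchoice)
  then obtain v where v: "\<And>c. c \<in> E \<Longrightarrow> v c \<noteq> 0 \<and> complex_of_matrix A *v v c = c *s v c"
    by blast
  have inj: "inj_on v E"
  proof (rule inj_onI)
    fix c d assume "c \<in> E" "d \<in> E" "v c = v d"
    then have "complex_of_matrix A *v v c = c *s v c" "complex_of_matrix A *v v c = d *s v c"
      and "v c \<noteq> 0"
      using v by metis+
    then have "(c - d) *s v c = 0"
      by (metis vector_sub_rdistrib right_minus_eq)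
    then show "c = d" using \<open>v c \<noteq> 0\<close> by (simp add: vector_mul_eq_0)
  qed
  have "vec.independent (v ` E)"
  proof
    assume "vec.dependent (v ` E)"
    then obtain T u where T: "finite T" "T \<subseteq> v ` E" "(\<Sum>w\<in>T. u w *s w) = 0" "\<exists>w\<in>T. u w \<noteq> 0"
      unfolding vec.dependent_explicit by blast
    obtain S where S: "S \<subseteq> E" "T = v ` S"
      using T(2) subset_imageE by metis
    have injS: "inj_on v S" using inj S(1) by (rule inj_on_subset)
    have "finite S" using T(1) injS S(2) by (simp add: finite_image_iff)
    moreover have "\<And>c. c \<in> S \<Longrightarrow> v c \<noteq> 0 \<and> complex_of_matrix A *v v c = c *s v c"
      using v S(1) by blast
    moreover have "(\<Sum>c\<in>S. u (v c) *s v c) = 0"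
      using T(3) unfolding S(2) sum.reindex[OF injS] by (simp add: comp_def)
    ultimately have "\<forall>c\<in>S. u (v c) = 0"
      by (rule eigenvector_combination_eq_0)
    then show False using T(4) S(2) by blast
  qed
  then have "finite (v ` E)" by (rule vec.finiteI_independent)
  then show ?thesis using inj unfolding E_def[symmetric] by (simp add: finite_image_iff)
qed

lemma complex_eigenvalue_iff_det:
  "complex_eigenvalue A c \<longleftrightarrow> det (complex_of_matrix A - mat c) = 0"
proof -
  have "complex_of_matrix A *v v = c *s v \<longleftrightarrow> (complex_of_matrix A - mat c) *v v = 0" for v
    by (simp add: matrix_vector_mult_diff_rdistrib mat_matrix_vector_mult)
  moreover have "det D \<noteq> 0 \<longleftrightarrow> (\<forall>v. D *v v = 0 \<longrightarrow> v = 0)" for D :: "complex^'n^'n"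
    by (simp add: invertible_det_nz[symmetric] invertible_left_inverse matrix_left_invertible_ker)
  ultimately show ?thesis
    unfolding complex_eigenvalue_iff by blast
qed

lemma complex_eigenvalue_transpose:
  "complex_eigenvalue (transpose A) c \<longleftrightarrow> complex_eigenvalue A c"
proof -
  have "complex_of_matrix (transpose A) - mat c = transpose (complex_of_matrix A - mat c)"
    by (simp add: vec_eq_iff complex_of_matrix_def transpose_def mat_def)
  then show ?thesis
    by (simp add: complex_eigenvalue_iff_det)
qed

lemma complex_eigenvalue_of_real:
  fixes A :: "real^'n^'n"
  assumes "A *v x = l *\<^sub>R x" "x \<noteq> 0"
  shows "complex_eigenvalue A (complex_of_real l)"
proof -
  define v :: "complex^'n" where "v = (\<chi> i. complex_of_real (x $ i))"
  have "v \<noteq> 0" using assms(2) by (auto simp: v_def vec_eq_iff)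
  moreover have "complex_of_matrix A *v v = complex_of_real l *s v"
    using arg_cong[where f="\<lambda>y. complex_of_real (y $ i)" for i, OF assms(1)]
    by (simp add: vec_eq_iff complex_of_matrix_def v_def matrix_vector_mult_def)
  ultimately show ?thesis by (auto simp: complex_eigenvalue_iff)
qed

lemma complex_eigenvalue_subinvariant:
  fixes A :: "real^'n^'n"
  assumes "0 \<le> A" "complex_eigenvalue A c"
  shows "\<exists>y. 0 \<le> y \<and> y \<noteq> 0 \<and> cmod c *\<^sub>R y \<le> A *v y"
proof -
  obtain v where v: "v \<noteq> 0" "complex_of_matrix A *v v = c *s v"
    using assms(2) by (auto simp: complex_eigenvalue_iff)
  define y :: "real^'n" where "y = (\<chi> i. cmod (v $ i))"
  have "cmod c * y $ i \<le> (A *v y) $ i" for i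
  proof -
    have "cmod c * y $ i = cmod (\<Sum>j\<in>UNIV. complex_of_real (A $ i $ j) * v $ j)"
      using v(2) by (simp add: vec_eq_iff y_def norm_mult complex_of_matrix_def matrix_vector_mult_def)
    also have "\<dots> \<le> (\<Sum>j\<in>UNIV. cmod (complex_of_real (A $ i $ j) * v $ j))"
      by (rule norm_sum)
    also have "\<dots> = (A *v y) $ i"
      using assms(1) by (simp add: y_def norm_mult matrix_vector_mult_def less_eq_vec_def)
    finally show ?thesis .
  qed
  moreover have "y \<noteq> 0" using v(1) by (auto simp: y_def vec_eq_iff)
  ultimately show ?thesis
    by (intro exI[of _ y]) (auto simp: less_eq_vec_def y_def)
qed

section \<open>Perron--Frobenius theory\<close>

definition entry_sum :: "real^'n \<Rightarrow> real" where
  "entry_sum x = (\<Sum>i\<in>UNIV. x $ i)"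

lemma linear_entry_sum: "linear entry_sum"
  by (auto simp: linear_iff entry_sum_def sum.distrib sum_distrib_left)

lemma entry_sum_mono: "x \<le> y \<Longrightarrow> entry_sum x \<le> entry_sum y"
  by (simp add: entry_sum_def less_eq_vec_def sum_mono)

lemma entry_sum_nonneg: "0 \<le> x \<Longrightarrow> 0 \<le> entry_sum x"
  using entry_sum_mono[of 0 x] by (simp add: entry_sum_def)

lemma component_le_entry_sum: "0 \<le> x \<Longrightarrow> x $ i \<le> entry_sum x"
  unfolding entry_sum_def by (rule member_le_sum) (auto simp: less_eq_vec_def)

lemma entry_sum_pos: "0 \<le> x \<Longrightarrow> x \<noteq> 0 \<Longrightarrow> 0 < entry_sum x"
  by (metis component_le_entry_sum less_eq_vec_def order_le_less_trans order_le_neq_trans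
      vec_eq_iff zero_index)

definition subinvariant_simplex :: "real^'n^'n \<Rightarrow> real \<Rightarrow> (real^'n) set" where
  "subinvariant_simplex A \<mu> = {x. 0 \<le> x \<and> entry_sum x = 1 \<and> \<mu> *\<^sub>R x \<le> A *v x}"

lemma subinvariant_simplex_eq:
  "subinvariant_simplex A \<mu> = {0..} \<inter> entry_sum -` {1} \<inter> (\<lambda>x. A *v x - \<mu> *\<^sub>R x) -` {0..}"
  by (auto simp: subinvariant_simplex_def less_eq_vec_def)

lemma linear_matrix_vector_mult_minus_scaleR: "linear (\<lambda>x. (A::real^'n^'n) *v x - \<mu> *\<^sub>R x)"
  by (simp add: linear_iff algebra_simps)

lemma compact_subinvariant_simplex: "compact (subinvariant_simplex A \<mu>)"
proof -
  have "subinvariant_simplex A \<mu> \<subseteq> {0..1}"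
  proof
    fix x assume "x \<in> subinvariant_simplex A \<mu>"
    then have "0 \<le> x" "entry_sum x = 1" by (auto simp: subinvariant_simplex_def)
    then show "x \<in> {0..1}"
      using component_le_entry_sum[OF \<open>0 \<le> x\<close>] by (simp add: less_eq_vec_def)
  qed
  moreover have "closed (subinvariant_simplex A \<mu>)"
    unfolding subinvariant_simplex_eq
    using linear_entry_sum linear_matrix_vector_mult_minus_scaleR
    unfolding linear_conv_bounded_linear
    by (auto intro!: closed_Int continuous_closed_vimage linear_continuous_at)
  ultimately show ?thesis
    by (meson bounded_closed_interval bounded_subset compact_eq_bounded_closed)
qed

lemma convex_subinvariant_simplex: "convex (subinvariant_simplex A \<mu>)"
  unfolding subinvariant_simplex_eq
  using linear_entry_sum linear_matrix_vector_mult_minus_scaleR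
  by (intro convex_Int convex_linear_vimage is_interval_convex is_interval_ci convex_singleton)

lemma subinvariant_simplex_step:
  assumes A: "0 \<le> A" and x: "x \<in> subinvariant_simplex A \<mu>"
  shows "(1 / (1 + entry_sum (A *v x))) *\<^sub>R (A *v x + x) \<in> subinvariant_simplex A \<mu>"
proof -
  have "0 \<le> x" "entry_sum x = 1" and sub: "\<mu> *\<^sub>R x \<le> A *v x"
    using x by (auto simp: subinvariant_simplex_def)
  define s where "s = 1 + entry_sum (A *v x)"
  have s: "0 < s"
    using entry_sum_nonneg[OF nonneg_matrix_vector_mult[OF A \<open>0 \<le> x\<close>]] by (simp add: s_def)
  have "\<mu> *\<^sub>R (A *v x + x) \<le> A *v (A *v x + x)"
    using sub matrix_vector_mult_mono[OF A sub] by (simp add: algebra_simps add_mono)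
  then have "(1 / s) *\<^sub>R (\<mu> *\<^sub>R (A *v x + x)) \<le> (1 / s) *\<^sub>R (A *v (A *v x + x))"
    using s by (intro scaleR_left_mono) auto
  moreover have "0 \<le> A *v x + x"
    using nonneg_matrix_vector_mult[OF A \<open>0 \<le> x\<close>] \<open>0 \<le> x\<close> by simp
  moreover have "entry_sum (A *v x + x) = s"
    using \<open>entry_sum x = 1\<close> by (simp add: s_def linear_add[OF linear_entry_sum])
  ultimately show ?thesis
    using s by (simp add: subinvariant_simplex_def s_def[symmetric] linear_scale[OF linear_entry_sum]
        matrix_vector_mult_scaleR scaleR_nonneg_nonneg)
qed

text \<open>Brouwer's theorem gives a fixed point of
  \<open>x \<mapsto> (A x + x) / (1 + \<Sum>\<^sub>i (A x)\<^sub>i)\<close> on the subinvariant simplex; the shift by \<open>x\<close>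
  keeps the normalising sum positive.\<close>
lemma nonneg_eigenvector_ge:
  fixes A :: "real^'n^'n"
  assumes A: "0 \<le> A" and y: "0 \<le> y" "y \<noteq> 0" "\<mu> *\<^sub>R y \<le> A *v y"
  shows "\<exists>x l. 0 \<le> x \<and> x \<noteq> 0 \<and> \<mu> \<le> l \<and> A *v x = l *\<^sub>R x"
proof -
  define K where "K = subinvariant_simplex A \<mu>"
  define f where "f x = (1 / (1 + entry_sum (A *v x))) *\<^sub>R (A *v x + x)" for x
  have denom_pos: "0 < 1 + entry_sum (A *v x)" if "x \<in> K" for x
    using that A by (simp add: K_def subinvariant_simplex_def add_pos_nonneg entry_sum_nonneg
        nonneg_matrix_vector_mult)
  have "(1 / entry_sum y) *\<^sub>R y \<in> K"
  proof -
    have "(1 / entry_sum y) *\<^sub>R (\<mu> *\<^sub>R y) \<le> (1 / entry_sum y) *\<^sub>R (A *v y)"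
      using y(3) entry_sum_pos[OF y(1,2)] by (intro scaleR_left_mono) auto
    then show ?thesis
      using y(1) entry_sum_pos[OF y(1,2)]
      by (simp add: K_def subinvariant_simplex_def linear_scale[OF linear_entry_sum]
          matrix_vector_mult_scaleR scaleR_nonneg_nonneg)
  qed
  moreover have "continuous_on K f"
  proof -
    have "linear (\<lambda>x. entry_sum (A *v x))"
      using linear_compose[OF matrix_vector_mul_linear linear_entry_sum] by (simp add: o_def)
    then show ?thesis
      unfolding f_def linear_conv_bounded_linear
      by (intro continuous_intros linear_continuous_on) (auto dest: denom_pos)
  qed
  moreover have "f \<in> K \<rightarrow> K"
    using subinvariant_simplex_step[OF A] by (simp add: K_def f_def)
  ultimately obtain x where x: "x \<in> K" "f x = x"
    using brouwer[of K f] compact_subinvariant_simplex convex_subinvariant_simplex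
    unfolding K_def by blast
  then have "0 \<le> x" "entry_sum x = 1" and sub: "\<mu> *\<^sub>R x \<le> A *v x"
    by (auto simp: K_def subinvariant_simplex_def)
  have "(1 + entry_sum (A *v x)) *\<^sub>R f x = A *v x + x"
    using denom_pos[OF x(1)] by (simp add: f_def)
  then have "A *v x = entry_sum (A *v x) *\<^sub>R x"
    using x(2) by (simp add: algebra_simps)
  moreover have "\<mu> \<le> entry_sum (A *v x)"
    using entry_sum_mono[OF sub] \<open>entry_sum x = 1\<close> by (simp add: linear_scale[OF linear_entry_sum])
  moreover have "x \<noteq> 0" using \<open>entry_sum x = 1\<close> by (auto simp: entry_sum_def)
  ultimately show ?thesis using \<open>0 \<le> x\<close> by blast
qed

lemma complex_eigenvalue_exists:
  fixes A :: "real^'n^'n"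
  assumes "0 \<le> A"
  shows "\<exists>c. complex_eigenvalue A c"
proof -
  have "0 \<le> axis i (1::real)" "axis i (1::real) \<noteq> 0" for i :: 'n
    by (auto simp: less_eq_vec_def axis_def vec_eq_iff)
  moreover have "0 *\<^sub>R axis i 1 \<le> A *v axis i 1" for i :: 'n
    using nonneg_matrix_vector_mult[OF assms] calculation by simp
  ultimately show ?thesis
    using nonneg_eigenvector_ge[OF assms] complex_eigenvalue_of_real by metis
qed

lemma finite_eigenvalue_norms: "finite {cmod c | c. complex_eigenvalue A c}"
  using finite_imageI[OF finite_complex_eigenvalues, of cmod A] by (simp add: setcompr_eq_image)

lemma norm_le_spectral_radius: "complex_eigenvalue A c \<Longrightarrow> cmod c \<le> spectral_radius A"
  unfolding spectral_radius_def by (rule Max_ge[OF finite_eigenvalue_norms]) blast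

lemma spectral_radius_attained:
  fixes A :: "real^'n^'n"
  assumes "0 \<le> A"
  shows "\<exists>c. complex_eigenvalue A c \<and> cmod c = spectral_radius A"
proof -
  have "{cmod c | c. complex_eigenvalue A c} \<noteq> {}"
    using complex_eigenvalue_exists[OF assms] by blast
  then have "spectral_radius A \<in> {cmod c | c. complex_eigenvalue A c}"
    unfolding spectral_radius_def by (rule Max_in[OF finite_eigenvalue_norms])
  then show ?thesis by auto
qed

lemma spectral_radius_nonneg: "0 \<le> (A::real^'n^'n) \<Longrightarrow> 0 \<le> spectral_radius A"
  by (metis norm_ge_zero spectral_radius_attained)

lemma spectral_radius_transpose: "spectral_radius (transpose A) = spectral_radius A"
  by (simp add: spectral_radius_def complex_eigenvalue_transpose)

lemma nonneg_transpose: "0 \<le> A \<Longrightarrow> 0 \<le> transpose A"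
  by (simp add: less_eq_vec_def transpose_def)

lemma spectral_radius_ge:
  fixes A :: "real^'n^'n"
  assumes "0 \<le> A" "0 \<le> y" "y \<noteq> 0" "\<mu> *\<^sub>R y \<le> A *v y"
  shows "\<mu> \<le> spectral_radius A"
proof -
  obtain x l where "x \<noteq> 0" "\<mu> \<le> l" "A *v x = l *\<^sub>R x"
    using nonneg_eigenvector_ge[OF assms] by blast
  then have "cmod (complex_of_real l) \<le> spectral_radius A"
    by (intro norm_le_spectral_radius complex_eigenvalue_of_real)
  then show ?thesis using \<open>\<mu> \<le> l\<close> by simp
qed

lemma spectral_radius_ge_left:
  fixes A :: "real^'n^'n"
  assumes "0 \<le> A" "0 \<le> y" "y \<noteq> 0" "\<mu> *\<^sub>R y \<le> y v* A"
  shows "\<mu> \<le> spectral_radius A"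
  using spectral_radius_ge[OF nonneg_transpose[OF assms(1)] assms(2,3)] assms(4)
  by (simp add: spectral_radius_transpose)

lemma perron_eigenvector:
  fixes A :: "real^'n^'n"
  assumes "0 \<le> A"
  shows "\<exists>x. 0 \<le> x \<and> x \<noteq> 0 \<and> A *v x = spectral_radius A *\<^sub>R x"
proof -
  obtain c where c: "complex_eigenvalue A c" "cmod c = spectral_radius A"
    using spectral_radius_attained[OF assms] by blast
  obtain y where "0 \<le> y" "y \<noteq> 0" "cmod c *\<^sub>R y \<le> A *v y"
    using complex_eigenvalue_subinvariant[OF assms c(1)] by blast
  then obtain x l where x: "0 \<le> x" "x \<noteq> 0" "cmod c \<le> l" "A *v x = l *\<^sub>R x"
    using nonneg_eigenvector_ge[OF assms] by blast
  have "cmod (complex_of_real l) \<le> spectral_radius A"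
    using x(2,4) by (intro norm_le_spectral_radius complex_eigenvalue_of_real)
  then have "l = spectral_radius A" using x(3) c(2) by simp
  then show ?thesis using x by blast
qed

lemma perron_left_eigenvector:
  fixes A :: "real^'n^'n"
  assumes "0 \<le> A"
  shows "\<exists>z. 0 \<le> z \<and> z \<noteq> 0 \<and> z v* A = spectral_radius A *\<^sub>R z"
  using perron_eigenvector[OF nonneg_transpose[OF assms]] by (simp add: spectral_radius_transpose)

lemma spectral_radius_mult_le_commute:
  fixes X :: "real^'m^'n" and Y :: "real^'n^'m"
  assumes "0 \<le> X" "0 \<le> Y"
  shows "spectral_radius (X ** Y) \<le> spectral_radius (Y ** X)"
proof (cases "spectral_radius (X ** Y) = 0")
  case True
  then show ?thesis using spectral_radius_nonneg[OF nonneg_matrix_mult[OF assms(2,1)]] by simp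
next
  case False
  define l where "l = spectral_radius (X ** Y)"
  obtain z where z: "0 \<le> z" "z \<noteq> 0" "z v* (X ** Y) = l *\<^sub>R z"
    using perron_left_eigenvector[OF nonneg_matrix_mult[OF assms]] by (auto simp: l_def)
  have "(z v* X) v* Y \<noteq> 0"
    using z(2,3) False by (simp add: l_def vector_matrix_mul_assoc)
  then have "z v* X \<noteq> 0" by auto
  moreover have "(z v* X) v* (Y ** X) = (z v* (X ** Y)) v* X"
    by (simp add: vector_matrix_mul_assoc matrix_mul_assoc)
  then have "(z v* X) v* (Y ** X) = l *\<^sub>R (z v* X)"
    using z(3) by (simp add: scaleR_vector_matrix_assoc)
  ultimately have "l \<le> spectral_radius (Y ** X)"
    using nonneg_vector_matrix_mult[OF assms(1) z(1)]
    by (intro spectral_radius_ge_left nonneg_matrix_mult assms) auto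
  then show ?thesis by (simp add: l_def)
qed

section \<open>Proper splittings\<close>

lemma proper_splitting_projections:
  assumes "proper_splitting A U V"
  shows "U ** mp_inverse U = A ** mp_inverse A" "mp_inverse U ** U = mp_inverse A ** A"
  using assms same_range_null_projections[OF penrose_inverse_mp_inverse penrose_inverse_mp_inverse]
  unfolding proper_splitting_def by blast+

lemma proper_splitting_identities:
  assumes "proper_splitting A U V"
  defines "X \<equiv> mp_inverse A" and "Y \<equiv> mp_inverse U"
  shows "V ** (X ** A) = V" "(X ** A) ** Y = Y" "Y ** (A ** X) = Y"
    "Y ** A = X ** A - Y ** V" "X ** V ** Y = X - Y"
proof -
  have AV: "A = U - V" and UY: "U ** Y = A ** X" and YU: "Y ** U = X ** A"
    using assms proper_splitting_projections[OF assms(1)] by (auto simp: proper_splitting_def)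
  have AXA: "A ** X ** A = A" and XAX: "X ** A ** X = X"
    using penrose_inverse_mp_inverse[of A] by (simp_all add: X_def penrose_inverse_def)
  have UYU: "U ** Y ** U = U" and YUY: "Y ** U ** Y = Y"
    using penrose_inverse_mp_inverse[of U] by (simp_all add: Y_def penrose_inverse_def)
  have "U ** (X ** A) = U" using UYU by (simp add: YU[symmetric] matrix_mul_assoc)
  then show "V ** (X ** A) = V"
    using AXA AV by (simp add: matrix_diff_rdistrib matrix_mul_assoc)
  show XAY: "(X ** A) ** Y = Y" using YUY by (simp add: YU[symmetric])
  show "Y ** (A ** X) = Y" using YUY by (simp add: UY[symmetric] matrix_mul_assoc)
  show "Y ** A = X ** A - Y ** V"
    using AV by (simp add: matrix_diff_ldistrib YU)
  have "X ** V ** Y = X ** (U ** Y) - (X ** A) ** Y"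
    using AV by (simp add: matrix_diff_ldistrib matrix_diff_rdistrib matrix_mul_assoc)
  then show "X ** V ** Y = X - Y"
    using XAX XAY by (simp add: UY matrix_mul_assoc)
qed

lemma proper_regular_splittingD:
  assumes "proper_regular_splitting A U V"
  shows "proper_splitting A U V" "A = U - V" "0 \<le> mp_inverse U" "0 \<le> V"
  using assms by (auto simp: proper_regular_splitting_def proper_splitting_def nonneg_mat_imp_nonneg)

lemma proper_splitting_eigenvector:
  assumes "proper_splitting A U V" "l \<noteq> 0" "(mp_inverse U ** V) *v x = l *\<^sub>R x"
  shows "(1 - l) *\<^sub>R ((mp_inverse A ** V) *v x) = l *\<^sub>R x"
proof -
  define X Y where "X = mp_inverse A" and "Y = mp_inverse U"
  note ids = proper_splitting_identities[OF assms(1), folded X_def Y_def]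
  have x: "(Y ** V) *v x = l *\<^sub>R x" using assms(3) by (simp add: Y_def)
  have Px: "(X ** A) *v x = x"
  proof -
    have "(X ** A) *v ((Y ** V) *v x) = (Y ** V) *v x"
      using ids(2) by (simp add: matrix_vector_mul_assoc matrix_mul_assoc)
    then show ?thesis using x assms(2) by (simp add: matrix_vector_mult_scaleR)
  qed
  have "Y *v (A *v x) = (X ** A) *v x - (Y ** V) *v x"
    by (simp add: matrix_vector_mul_assoc ids(4) matrix_vector_mult_diff_rdistrib)
  then have "Y *v (A *v x) = (1 - l) *\<^sub>R x"
    using Px x by (simp add: algebra_simps)
  then have Ax: "A *v x = (1 - l) *\<^sub>R (U *v x)"
    using proper_splitting_projections(1)[OF assms(1)] penrose_inverse_mp_inverse[of A]
    by (metis X_def Y_def matrix_vector_mul_assoc matrix_vector_mult_scaleR penrose_inverse_def)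
  have "V *v x = U *v x - A *v x"
    using assms(1) by (simp add: proper_splitting_def matrix_vector_mult_diff_rdistrib)
  then have "V *v x = l *\<^sub>R (U *v x)"
    using Ax by (simp add: algebra_simps)
  then have "(1 - l) *\<^sub>R (V *v x) = l *\<^sub>R (A *v x)"
    using Ax by (simp add: mult.commute)
  then show ?thesis
    using Px by (metis X_def matrix_vector_mul_assoc matrix_vector_mult_scaleR)
qed

lemma proper_regular_splitting_convergent:
  assumes "0 \<le> mp_inverse A" "proper_regular_splitting A U V"
  shows "spectral_radius (mp_inverse U ** V) < 1"
proof (rule ccontr)
  define l where "l = spectral_radius (mp_inverse U ** V)"
  note split = proper_regular_splittingD[OF assms(2)]
  assume "\<not> spectral_radius (mp_inverse U ** V) < 1"
  then have l: "1 \<le> l" by (simp add: l_def)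
  obtain x where x: "0 \<le> x" "x \<noteq> 0" "(mp_inverse U ** V) *v x = l *\<^sub>R x"
    using perron_eigenvector[OF nonneg_matrix_mult[OF split(3,4)]] by (auto simp: l_def)
  have eq: "(1 - l) *\<^sub>R ((mp_inverse A ** V) *v x) = l *\<^sub>R x"
    using proper_splitting_eigenvector[OF split(1) _ x(3)] l by simp
  obtain i where "x $ i \<noteq> 0"
    using x(2) by (auto simp: vec_eq_iff)
  then have "0 < l * x $ i"
    using x(1) l by (simp add: less_eq_vec_def order_le_neq_trans)
  moreover have "0 \<le> ((mp_inverse A ** V) *v x) $ i"
    using nonneg_matrix_vector_mult[OF nonneg_matrix_mult[OF assms(1) split(4)] x(1)]
    by (simp add: less_eq_vec_def)
  with l have "(1 - l) * ((mp_inverse A ** V) *v x) $ i \<le> 0"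
    by (simp add: mult_nonpos_nonneg)
  moreover have "(1 - l) * ((mp_inverse A ** V) *v x) $ i = l * x $ i"
    using arg_cong[where f="\<lambda>v. v $ i", OF eq] by simp
  ultimately show False by linarith
qed

text \<open>\<open>K = U\<^sup>\<dagger> + U\<^sup>\<dagger>V M\<^sup>\<dagger>\<close> is the matrix of the two-stage iteration \<open>x \<mapsto> H x + K b\<close>,
  and \<open>K A = A\<^sup>\<dagger>A - H\<close> expresses its consistency with \<open>A x = b\<close>.\<close>
lemma two_stage_left_eigenvector:
  assumes "proper_splitting A U V" "proper_splitting A M N" "l \<noteq> 0"
    and zH: "z v* (mp_inverse U ** V ** mp_inverse M ** N) = l *\<^sub>R z"
  shows "z v* (mp_inverse U + mp_inverse U ** V ** mp_inverse M) = (1 - l) *\<^sub>R (z v* mp_inverse A)"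
proof -
  define X Y W where "X = mp_inverse A" and "Y = mp_inverse U" and "W = mp_inverse M"
  define H K where "H = Y ** V ** W ** N" and "K = Y + Y ** V ** W"
  note idsU = proper_splitting_identities[OF assms(1), folded X_def Y_def]
  note idsM = proper_splitting_identities[OF assms(2), folded X_def W_def]
  have zH': "z v* H = l *\<^sub>R z" using zH by (simp add: H_def Y_def W_def)
  have KA: "K ** A = X ** A - H"
  proof -
    have "K ** A = Y ** A + Y ** V ** (W ** A)"
      by (simp add: K_def matrix_add_rdistrib matrix_mul_assoc)
    also have "\<dots> = (X ** A - Y ** V) + (Y ** (V ** (X ** A)) - Y ** V ** (W ** N))"
      by (simp add: idsU(4) idsM(4) matrix_diff_ldistrib matrix_mul_assoc)
    also have "Y ** (V ** (X ** A)) = Y ** V" by (simp add: idsU(1))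
    finally show ?thesis by (simp add: H_def matrix_mul_assoc)
  qed
  have KAX: "K ** (A ** X) = K"
    by (simp add: K_def matrix_add_rdistrib idsU(3) idsM(3) flip: matrix_mul_assoc)
  have zXA: "z v* (X ** A) = z"
  proof -
    have "H ** (X ** A) = H" by (simp add: H_def idsM(1) flip: matrix_mul_assoc)
    then have "l *\<^sub>R (z v* (X ** A)) = l *\<^sub>R z"
      by (metis zH' scaleR_vector_matrix_assoc vector_matrix_mul_assoc)
    then show ?thesis using assms(3) by simp
  qed
  have "z v* K = (z v* (K ** A)) v* X"
    by (metis KAX vector_matrix_mul_assoc matrix_mul_assoc)
  also have "\<dots> = (1 - l) *\<^sub>R (z v* X)"
    by (simp add: KA vector_matrix_mult_diff_rdistrib zXA zH' scaleR_vector_matrix_assoc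
        vector_matrix_mul_assoc scaleR_diff_left vector_matrix_mult_diff_distrib)
  finally show ?thesis by (simp add: K_def X_def Y_def W_def)
qed

lemma product_left_eigenvector_subinvariant:
  assumes "0 \<le> mp_inverse A" "proper_regular_splitting A U V" "proper_regular_splitting A M N"
    and z: "0 \<le> z" "z \<noteq> 0" and l: "0 < l"
    and zH: "z v* (mp_inverse U ** V ** mp_inverse M ** N) = l *\<^sub>R z"
  shows "\<exists>r. 0 \<le> r \<and> r \<noteq> 0 \<and> l *\<^sub>R r \<le> r v* (mp_inverse U ** V)"
proof -
  define X Y W where "X = mp_inverse A" and "Y = mp_inverse U" and "W = mp_inverse M"
  note UV = proper_regular_splittingD[OF assms(2), folded Y_def]
  note MN = proper_regular_splittingD[OF assms(3), folded W_def]
  have "z v* Y \<le> z v* (Y + Y ** V ** W)"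
    using nonneg_vector_matrix_mult[OF nonneg_matrix_mult[OF nonneg_matrix_mult[OF UV(3,4)] MN(3)] z(1)]
    by (simp add: vector_matrix_mult_add_rdistrib)
  also have "\<dots> = (1 - l) *\<^sub>R (z v* X)"
    using two_stage_left_eigenvector[OF UV(1) MN(1) _ zH] l by (simp add: X_def Y_def W_def)
  finally have "(z v* Y) v* V \<le> ((1 - l) *\<^sub>R (z v* X)) v* V"
    by (rule vector_matrix_mult_mono[OF UV(4)])
  define r where "r = z v* (X ** V)"
  then have zYV: "z v* (Y ** V) \<le> (1 - l) *\<^sub>R r"
    using \<open>(z v* Y) v* V \<le> _\<close> by (simp add: vector_matrix_mul_assoc scaleR_vector_matrix_assoc)
  have "r v* (Y ** V) = z v* ((X ** V ** Y) ** V)"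
    by (simp add: r_def vector_matrix_mul_assoc matrix_mul_assoc)
  then have rYV: "r v* (Y ** V) = r - z v* (Y ** V)"
    using proper_splitting_identities(5)[OF UV(1), folded X_def Y_def]
    by (simp add: r_def matrix_diff_rdistrib vector_matrix_mult_diff_rdistrib)
  have "0 \<le> r"
    unfolding r_def X_def by (intro nonneg_vector_matrix_mult nonneg_matrix_mult assms(1) UV(4) z(1))
  moreover have "l *\<^sub>R r \<le> r v* (Y ** V)"
    using zYV unfolding rYV by (simp add: algebra_simps)
  moreover have "r \<noteq> 0"
  proof
    assume "r = 0"
    then have "z v* (Y ** V) = 0"
      using zYV nonneg_vector_matrix_mult[OF nonneg_matrix_mult[OF UV(3,4)] z(1)] by simp
    then have "z v* (Y ** V ** W ** N) = 0"
      by (simp flip: vector_matrix_mul_assoc matrix_mul_assoc)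
    then show False using zH z(2) l by (simp add: Y_def W_def)
  qed
  ultimately show ?thesis by (auto simp: Y_def)
qed

lemma spectral_radius_product_le:
  assumes "0 \<le> mp_inverse A" "proper_regular_splitting A U V" "proper_regular_splitting A M N"
  shows "spectral_radius (mp_inverse U ** V ** mp_inverse M ** N) \<le> spectral_radius (mp_inverse U ** V)"
proof -
  define l where "l = spectral_radius (mp_inverse U ** V ** mp_inverse M ** N)"
  note UV = proper_regular_splittingD[OF assms(2)] and MN = proper_regular_splittingD[OF assms(3)]
  have UV_nonneg: "0 \<le> mp_inverse U ** V" by (rule nonneg_matrix_mult[OF UV(3,4)])
  have "0 \<le> mp_inverse U ** V ** mp_inverse M ** N"
    by (intro nonneg_matrix_mult UV_nonneg MN(3,4))
  then obtain z where z: "0 \<le> z" "z \<noteq> 0" "z v* (mp_inverse U ** V ** mp_inverse M ** N) = l *\<^sub>R z"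
    using perron_left_eigenvector l_def by blast
  show ?thesis
  proof (cases "l = 0")
    case True
    then show ?thesis using spectral_radius_nonneg[OF UV_nonneg] by (simp add: l_def)
  next
    case False
    then have "0 < l" using spectral_radius_nonneg[OF \<open>0 \<le> _ ** N\<close>] by (simp add: l_def)
    then obtain r where "0 \<le> r" "r \<noteq> 0" "l *\<^sub>R r \<le> r v* (mp_inverse U ** V)"
      using product_left_eigenvector_subinvariant[OF assms z(1,2) \<open>0 < l\<close> z(3)] by blast
    then show ?thesis using spectral_radius_ge_left[OF UV_nonneg] by (simp add: l_def)
  qed
qed

theorem theorem4p5:
  fixes A M N U V :: "real^'n^'m"
  assumes "nonneg_mat A"
    and "nonneg_mat (mp_inverse A)"
    and "proper_regular_splitting A M N"
    and "proper_regular_splitting A U V"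
    and "mat_range (M + U - A) = mat_range A"
    and "mat_null (M + U - A) = mat_null A"
  shows "spectral_radius (mp_inverse U ** V ** mp_inverse M ** N)
           \<le> min (spectral_radius (mp_inverse U ** V)) (spectral_radius (mp_inverse M ** N))
       \<and> min (spectral_radius (mp_inverse U ** V)) (spectral_radius (mp_inverse M ** N)) < 1"
proof -
  have A: "0 \<le> mp_inverse A" using assms(2) by (rule nonneg_mat_imp_nonneg)
  note UV = proper_regular_splittingD[OF assms(4)] and MN = proper_regular_splittingD[OF assms(3)]
  have "spectral_radius (mp_inverse U ** V ** mp_inverse M ** N)
      \<le> spectral_radius (mp_inverse M ** N ** (mp_inverse U ** V))"
    using spectral_radius_mult_le_commute[OF nonneg_matrix_mult[OF UV(3,4)] nonneg_matrix_mult[OF MN(3,4)]]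
    by (simp add: matrix_mul_assoc)
  also have "\<dots> \<le> spectral_radius (mp_inverse M ** N)"
    using spectral_radius_product_le[OF A assms(3,4)] by (simp add: matrix_mul_assoc)
  finally show ?thesis
    using spectral_radius_product_le[OF A assms(4,3)] proper_regular_splitting_convergent[OF A assms(4)]
    by linarith
qed

end
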